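(* Let $n\in\mathbf{N}$ and $A\subset[n]$ have property P. For $a\in A\cap[1,\frac n2]$ let $p_a\geqslant0$ be the unique integer with $2^{p_a}a\in(\frac n4,\frac n2]$, let $B_{\frac12}=\{2^{p_a}a:a\in A\cap[1,\frac n2]\}$ and $B^{i(3)}_{\frac12}=B_{\frac12}\cap(i+3\mathbf{Z})$. Write $U=A\cap(\frac n2,n]\cap(1+3\mathbf{Z})$ and $A_{(\frac23,1]}=A\cap(\frac{2n}{3},n]$. Suppose $|U|\geqslant\frac n{12}+3$. Then $$\left|B^{2(3)}_{\frac12}\right|\leqslant\frac n{12}+2-\frac{|U|}{2},\qquad \left|B^{1(3)}_{\frac12}\right|\leqslant\frac n{10}+2-\frac{2|U|}{5}.$$ Moreover, if $\big(A_{(\frac23,1]}+A_{(\frac23,1]}\big)\cap4\mathbf{Z}$ contains an arithmetic progression of size at least $\frac{|A_{(\frac23,1]}|}{2}-1$, then either $|A_{(\frac23,1]}|\leqslant\frac n9+4$ or $$\left|B^{1(3)}_{\frac12}\right|\leqslant\frac{11n}{90}+4-\frac{2|U|}{5}-\frac{|A_{(\frac23,1]}|}{6}.$$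
   Context: A set $A\subset\mathbf{N}$ has property P if there are no $x,y,z\in A$ (not necessarily distinct $x,y$) with $z<x$, $z<y$ and $z\mid x+y$. Intervals denote sets of integers. *)

theory Defs
  imports Complex_Main
begin

definition propP :: "nat set \<Rightarrow> bool" where
  "propP A \<longleftrightarrow> \<not> (\<exists>x\<in>A. \<exists>y\<in>A. \<exists>z\<in>A. z < x \<and> z < y \<and> z dvd (x + y))"

definition Bhalf :: "nat \<Rightarrow> nat set \<Rightarrow> nat set" where
  "Bhalf n A = {2 ^ p * a | a p. a \<in> A \<and> 1 \<le> a \<and> 2 * a \<le> n
                     \<and> n < 4 * (2 ^ p * a) \<and> 2 * (2 ^ p * a) \<le> n}"

definition Uset :: "nat \<Rightarrow> nat set \<Rightarrow> nat set" where
  "Uset n A = {a \<in> A. n < 2 * a \<and> a \<le> n \<and> a mod 3 = 1}"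

definition Atop :: "nat \<Rightarrow> nat set \<Rightarrow> nat set" where
  "Atop n A = {a \<in> A. 2 * n < 3 * a \<and> a \<le> n}"

definition sumset :: "nat set \<Rightarrow> nat set \<Rightarrow> nat set" where
  "sumset X Y = {x + y | x y. x \<in> X \<and> y \<in> Y}"

definition is_AP :: "nat set \<Rightarrow> nat \<Rightarrow> bool" where
  "is_AP P m \<longleftrightarrow> (\<exists>b d. d \<ge> 1 \<and> P = {b + k * d | k. k < m})"

end

theory Submission
  imports Defs
begin

text \<open>Write the elements of \<open>U\<close> as \<open>3(c + i) + 1\<close> with indices \<open>i\<close> in an index set
  \<open>I \<subseteq> [0, N)\<close>, \<open>N \<approx> n/6\<close>. Every \<open>b \<in> B_{1/2}\<close> is a multiple of some \<open>a \<in> A\<close> below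
  \<open>n/2\<close>, so by property P it divides no sum of two elements of \<open>A\<close> above \<open>n/2\<close>. Hence for
  \<open>b \<equiv> 2\<close> (resp. \<open>b \<equiv> 1\<close>) mod 3 the number \<open>4b\<close> (resp. \<open>5b\<close>) is not in \<open>U + U\<close>, which
  in index terms yields a set \<open>T\<close> of the same size inside one residue class mod 4 (resp. mod 5)
  of \<open>[0, 2N]\<close> avoiding \<open>I + I\<close>. Pigeonhole gives two complementary residue classes of \<open>I\<close>
  of total size at least \<open>2|I|/D\<close>; their sumset lies in the residue class of \<open>T\<close>, misses
  \<open>T\<close> and has at least their total size minus one elements, and counting that residue class
  gives the first two bounds.

  For the third, a long progression of multiples of 4 among the sums of \<open>A_{(2/3,1]}\<close> has
  step 4 or 8, so a third of the quotients \<open>s/4\<close> are \<open>\<equiv> 1\<close> mod 3; they lie in \<open>(n/3, n/2]\<close>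
  and are excluded from \<open>B_{1/2}\<close> for the same divisibility reason, while the part of
  \<open>B_{1/2}\<close> below \<open>n/3\<close> is bounded as before.\<close>

lemma card_sumset_ge:
  fixes X Y :: "nat set"
  assumes "finite X" "finite Y" "X \<noteq> {}" "Y \<noteq> {}"
  shows "card X + card Y \<le> card (sumset X Y) + 1"
proof -
  define a where "a = Min X"
  define b where "b = Max Y"
  have a: "a \<in> X" "\<And>x. x \<in> X \<Longrightarrow> a \<le> x" using assms a_def by auto
  have b: "b \<in> Y" "\<And>y. y \<in> Y \<Longrightarrow> y \<le> b" using assms b_def by auto
  let ?L = "(\<lambda>y. a + y) ` Y" and ?R = "(\<lambda>x. x + b) ` X"
  have "finite (sumset X Y)"
  proof -
    have "sumset X Y = (\<lambda>(x, y). x + y) ` (X \<times> Y)" unfolding sumset_def by auto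
    thus ?thesis using assms by simp
  qed
  moreover have "?L \<union> ?R \<subseteq> sumset X Y" using a b unfolding sumset_def by blast
  ultimately have "card (?L \<union> ?R) \<le> card (sumset X Y)" by (rule card_mono)
  moreover have "?L \<inter> ?R \<subseteq> {a + b}"
    using a b by (fastforce simp: add_mono antisym)
  hence "card (?L \<inter> ?R) \<le> 1" using card_mono[of "{a + b}"] by simp
  moreover have "card (?L \<union> ?R) + card (?L \<inter> ?R) = card Y + card X"
    using card_Un_Int[of ?L ?R] assms by (simp add: card_image inj_on_def)
  ultimately show ?thesis by linarith
qed

lemma card_residue_class_atMost:
  fixes D R s :: nat
  assumes "D > 0"
  shows "card {w. w \<le> R \<and> w mod D = s} \<le> R div D + 1"
proof -
  have "inj_on (\<lambda>w. w div D) {w. w \<le> R \<and> w mod D = s}"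
    by (rule inj_onI) (metis (mono_tags, lifting) mem_Collect_eq div_mod_decomp)
  moreover have "(\<lambda>w. w div D) ` {w. w \<le> R \<and> w mod D = s} \<subseteq> {..R div D}"
    by (auto intro: div_le_mono)
  ultimately have "card {w. w \<le> R \<and> w mod D = s} \<le> card {..R div D}"
    by (intro card_inj_on_le) auto
  thus ?thesis by simp
qed

lemma card_residue_class_lessThan:
  fixes D N s :: nat
  assumes "D > 0"
  shows "D * card {j. j < N \<and> j mod D = s} \<le> N + D - 1"
proof (cases "N = 0")
  case False
  hence "{j. j < N \<and> j mod D = s} = {j. j \<le> N - 1 \<and> j mod D = s}" by auto
  hence "card {j. j < N \<and> j mod D = s} \<le> (N - 1) div D + 1"
    using card_residue_class_atMost[OF assms, of "N - 1" s] by simp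
  hence "D * card {j. j < N \<and> j mod D = s} \<le> D * ((N - 1) div D + 1)"
    by (rule mult_le_mono2)
  also have "\<dots> = D * ((N - 1) div D) + D" by simp
  also have "D * ((N - 1) div D) \<le> N - 1" by simp
  finally show ?thesis using False by linarith
qed simp

lemma bij_betw_complementary_residue:
  fixes D s :: nat
  assumes "D > 0"
  shows "bij_betw (\<lambda>r. (s + D - r) mod D) {..<D} {..<D}"
proof -
  have "r = r'" if "r < D" "r' < D" "r \<le> r'" "(s + D - r) mod D = (s + D - r') mod D" for r r'
  proof -
    have "D dvd (s + D - r) - (s + D - r')" using that by (simp add: mod_eq_dvd_iff_nat)
    moreover have "(s + D - r) - (s + D - r') = r' - r" using that by simp
    ultimately show "r = r'" using that nat_dvd_not_less[of "r' - r" D] by fastforce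
  qed
  hence inj: "inj_on (\<lambda>r. (s + D - r) mod D) {..<D}"
    by (intro inj_onI) (metis lessThan_iff nle_le)
  have "(\<lambda>r. (s + D - r) mod D) ` {..<D} = {..<D}"
    by (rule endo_inj_surj[OF _ _ inj]) (use assms in auto)
  thus ?thesis using inj unfolding bij_betw_def by blast
qed

lemma exists_complementary_residues_large:
  fixes D s :: nat and U :: "nat set"
  assumes "D > 0" "finite U"
  shows "\<exists>r<D. 2 * card U \<le> D * (card {u \<in> U. u mod D = r}
                                   + card {u \<in> U. u mod D = (s + D - r) mod D})"
proof (rule ccontr)
  define X where "X r = {u \<in> U. u mod D = r}" for r
  assume "\<not> ?thesis"
  hence "(\<Sum>r<D. D * (card (X r) + card (X ((s + D - r) mod D)))) < (\<Sum>r<D. 2 * card U)"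
    using assms(1) by (intro sum_strict_mono) (auto simp: X_def not_le)
  moreover have "(\<Sum>r<D. card (X r)) = card U"
  proof -
    have "card (\<Union>r<D. X r) = (\<Sum>r<D. card (X r))"
      using assms(2) by (intro card_UN_disjoint) (auto simp: X_def)
    moreover have "U = (\<Union>r<D. X r)" using assms(1) unfolding X_def by auto
    ultimately show ?thesis by simp
  qed
  moreover have "(\<Sum>r<D. card (X ((s + D - r) mod D))) = (\<Sum>r<D. card (X r))"
    using sum.reindex_bij_betw[OF bij_betw_complementary_residue[OF assms(1), of s]] by simp
  ultimately show False by (simp add: sum.distrib flip: sum_distrib_left)
qed

lemma card_residue_class_avoiding_sumset:
  fixes D N R s :: nat and U T :: "nat set"
  assumes D: "D > 0" and s: "s < D" and U: "U \<subseteq> {..<N}" and U_large: "N + D \<le> 2 * card U"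
    and R: "2 * N \<le> R + 2" and T: "\<forall>t\<in>T. t mod D = s \<and> t \<le> R"
    and T_avoids: "T \<inter> sumset U U = {}"
  shows "D * card T + 2 * card U \<le> D * (R div D + 2)"
proof -
  define X where "X r = {u \<in> U. u mod D = r}" for r
  have finU: "finite U" using U finite_subset by blast
  obtain r where r: "r < D" "2 * card U \<le> D * (card (X r) + card (X ((s + D - r) mod D)))"
    using exists_complementary_residues_large[OF D finU] unfolding X_def by blast
  let ?Y = "X r" and ?Z = "X ((s + D - r) mod D)"
  have class_small: "D * card (X q) \<le> N + D - 1" for q
  proof -
    have "X q \<subseteq> {j. j < N \<and> j mod D = q}" using U X_def by auto
    hence "card (X q) \<le> card {j. j < N \<and> j mod D = q}" by (intro card_mono) auto
    thus ?thesis using card_residue_class_lessThan[OF D, of N q] by (meson mult_le_mono2 order_trans)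
  qed
  have "?Y \<noteq> {}"
  proof
    assume "?Y = {}"
    thus False using r(2) class_small[of "(s + D - r) mod D"] U_large D by simp
  qed
  moreover have "?Z \<noteq> {}"
  proof
    assume "?Z = {}"
    thus False using r(2) class_small[of r] U_large D by simp
  qed
  ultimately have sumset_large: "card ?Y + card ?Z \<le> card (sumset ?Y ?Z) + 1"
    using finU by (intro card_sumset_ge) (auto simp: X_def)
  define W where "W = {w. w \<le> R \<and> w mod D = s}"
  have "sumset ?Y ?Z \<subseteq> W"
  proof
    fix w assume "w \<in> sumset ?Y ?Z"
    then obtain y z where yz: "y \<in> ?Y" "z \<in> ?Z" "w = y + z" unfolding sumset_def by blast
    have "w mod D = (y mod D + z mod D) mod D" using yz(3) by (simp add: mod_add_eq)
    also have "\<dots> = (r + (s + D - r)) mod D" using yz by (simp add: X_def mod_add_right_eq)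
    also have "\<dots> = s" using r(1) s by simp
    finally have "w mod D = s" .
    moreover have "y < N" "z < N" using yz U unfolding X_def by auto
    ultimately show "w \<in> W" using yz(3) R unfolding W_def by simp
  qed
  moreover have "T \<subseteq> W" using T unfolding W_def by auto
  moreover have "T \<inter> sumset ?Y ?Z = {}"
    using T_avoids unfolding sumset_def X_def by blast
  moreover have "finite W" unfolding W_def by simp
  ultimately have "card T + card (sumset ?Y ?Z) \<le> card W"
    by (metis card_Un_disjoint card_mono finite_subset Un_least)
  also have "\<dots> \<le> R div D + 1" unfolding W_def by (rule card_residue_class_atMost[OF D])
  finally have "card T + card ?Y + card ?Z \<le> R div D + 2" using sumset_large by linarith
  hence "D * (card T + card ?Y + card ?Z) \<le> D * (R div D + 2)" by (rule mult_le_mono2)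
  thus ?thesis using r(2) by (simp add: algebra_simps)
qed

lemma Bhalf_bounds:
  assumes "b \<in> Bhalf n A"
  shows "n < 4 * b" "2 * b \<le> n"
  using assms unfolding Bhalf_def by auto

lemma finite_Bhalf: "finite (Bhalf n A)"
  by (rule finite_subset[of _ "{..n}"]) (auto dest: Bhalf_bounds)

lemma Bhalf_not_dvd_upper_sum:
  assumes P: "propP A" and b: "b \<in> Bhalf n A"
    and x: "x \<in> A" "n < 2 * x" and y: "y \<in> A" "n < 2 * y"
  shows "\<not> b dvd x + y"
proof
  assume "b dvd x + y"
  from b obtain a p where a: "b = 2 ^ p * a" "a \<in> A" "2 * a \<le> n"
    unfolding Bhalf_def by blast
  hence "a dvd x + y" using \<open>b dvd x + y\<close> dvd_mult_right by blast
  moreover have "a < x" "a < y" using a x y by linarith+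
  ultimately show False using P a(2) x(1) y(1) unfolding propP_def by blast
qed

text \<open>The numbers \<open>3k + 1\<close> in \<open>(n/2, n]\<close> are those with
  \<open>upper_base n \<le> k < upper_base n + upper_count n\<close>; \<open>Uindex n A\<close> is the set of
  offsets \<open>k - upper_base n\<close> of the elements of \<open>U\<close>.\<close>

definition upper_base :: "nat \<Rightarrow> nat" where
  "upper_base n = (n + 4) div 6"

definition upper_count :: "nat \<Rightarrow> nat" where
  "upper_count n = (n + 2) div 3 - upper_base n"

lemma upper_residue_one_index:
  fixes n s :: nat
  assumes "s mod 3 = 1" "n < 2 * s" "s \<le> n"
  shows "s div 3 - upper_base n < upper_count n"
    and "s = 3 * (upper_base n + (s div 3 - upper_base n)) + 1"
proof -
  have s: "s = 3 * (s div 3) + 1" using assms(1) div_mult_mod_eq[of s 3] by linarith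
  hence "upper_base n \<le> s div 3" using assms(2) unfolding upper_base_def by linarith
  thus "s = 3 * (upper_base n + (s div 3 - upper_base n)) + 1" using s by simp
  show "s div 3 - upper_base n < upper_count n"
    using s assms \<open>upper_base n \<le> s div 3\<close> unfolding upper_count_def upper_base_def by linarith
qed

lemma upper_count_le: "6 * upper_count n \<le> n + 5"
  unfolding upper_count_def upper_base_def by linarith

definition Uindex :: "nat \<Rightarrow> nat set \<Rightarrow> nat set" where
  "Uindex n A = (\<lambda>u. u div 3 - upper_base n) ` Uset n A"

lemma Uindex_subset: "Uindex n A \<subseteq> {..<upper_count n}"
  using upper_residue_one_index(1) unfolding Uindex_def Uset_def by auto

lemma Uindex_mem:
  assumes "i \<in> Uindex n A"
  shows "3 * (upper_base n + i) + 1 \<in> Uset n A"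
proof -
  obtain u where u: "u \<in> Uset n A" "i = u div 3 - upper_base n"
    using assms unfolding Uindex_def by blast
  hence "u = 3 * (upper_base n + i) + 1" using upper_residue_one_index(2) unfolding Uset_def by auto
  thus ?thesis using u(1) by simp
qed

lemma card_Uindex: "card (Uindex n A) = card (Uset n A)"
  unfolding Uindex_def
proof (rule card_image, rule inj_onI)
  fix u v assume "u \<in> Uset n A" "v \<in> Uset n A" "u div 3 - upper_base n = v div 3 - upper_base n"
  thus "u = v"
    using upper_residue_one_index(2) unfolding Uset_def by (metis (mono_tags, lifting) mem_Collect_eq)
qed

lemma card_Uset_le: "card (Uset n A) \<le> upper_count n"
  using card_mono[OF _ Uindex_subset, of n A] by (simp add: card_Uindex)

text \<open>\<open>6 * upper_base n + 3 * (i + j) + 2\<close> is the sum of the two elements of \<open>U\<close> with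
  indices \<open>i\<close> and \<open>j\<close>.\<close>

lemma card_Bhalf_subset_le:
  fixes D R s :: nat and B :: "nat set" and g :: "nat \<Rightarrow> nat"
  assumes P: "propP A" and B: "B \<subseteq> Bhalf n A" and g: "inj_on g B"
    and D: "D > 0" "s < D" and g_class: "\<forall>b\<in>B. g b mod D = s \<and> g b \<le> R"
    and R: "2 * upper_count n \<le> R + 2" and U_large: "upper_count n + D \<le> 2 * card (Uset n A)"
    and divides: "\<And>b i j. b \<in> B \<Longrightarrow> i + j = g b \<Longrightarrow> b dvd 6 * upper_base n + 3 * (i + j) + 2"
  shows "D * card B + 2 * card (Uset n A) \<le> D * (R div D + 2)"
proof -
  have "g ` B \<inter> sumset (Uindex n A) (Uindex n A) = {}"
  proof (rule ccontr)
    assume "\<not> ?thesis"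
    then obtain b i j where b: "b \<in> B" and ij: "i \<in> Uindex n A" "j \<in> Uindex n A" "g b = i + j"
      unfolding sumset_def by blast
    define u v where "u = 3 * (upper_base n + i) + 1" and "v = 3 * (upper_base n + j) + 1"
    have "u \<in> Uset n A" "v \<in> Uset n A" using Uindex_mem ij u_def v_def by auto
    moreover have "b dvd u + v"
      using divides[OF b ij(3)[symmetric]] unfolding u_def v_def by (simp add: algebra_simps)
    ultimately show False
      using Bhalf_not_dvd_upper_sum[OF P, of b n u v] B b unfolding Uset_def by auto
  qed
  hence "D * card (g ` B) + 2 * card (Uindex n A) \<le> D * (R div D + 2)"
    using g_class U_large R
    by (intro card_residue_class_avoiding_sumset[OF D Uindex_subset]) (auto simp: card_Uindex)
  thus ?thesis by (simp add: card_image[OF g] card_Uindex)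
qed

lemma large_Uset_bounds:
  assumes "n + 36 \<le> 12 * card (Uset n A)"
  shows "26 \<le> n" "upper_count n + 6 \<le> 2 * card (Uset n A)"
  using assms card_Uset_le[of n A] upper_count_le[of n] by linarith+

lemma card_Bhalf_mod3_2_le:
  assumes P: "propP A" and U_large: "n + 36 \<le> 12 * card (Uset n A)"
  shows "12 * card {b \<in> Bhalf n A. b mod 3 = 2} + 6 * card (Uset n A) \<le> n + 24"
proof -
  let ?B = "{b \<in> Bhalf n A. b mod 3 = 2}" and ?N = "upper_count n" and ?c = "upper_base n"
  \<comment> \<open>\<open>2b \<equiv> 1 (mod 3)\<close> lies in \<open>(n/2, n]\<close> and has index \<open>\<tau> b\<close>, so \<open>4b = u + v\<close>
    with \<open>u, v \<in> U\<close> iff the indices of \<open>u, v\<close> add up to \<open>2 \<tau> b\<close>.\<close>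
  define \<tau> where "\<tau> b = 2 * b div 3 - ?c" for b
  have index: "\<tau> b < ?N" "2 * b = 3 * (?c + \<tau> b) + 1" if "b \<in> ?B" for b
  proof -
    have "(2 * b) mod 3 = 1" using that by (simp add: mod_mult_right_eq[symmetric])
    thus "\<tau> b < ?N" "2 * b = 3 * (?c + \<tau> b) + 1"
      using upper_residue_one_index[of "2 * b" n] Bhalf_bounds[of b n A] that
      unfolding \<tau>_def by auto
  qed
  have "4 * card ?B + 2 * card (Uset n A) \<le> 4 * ((2 * ?N - 2) div 4 + 2)"
  proof (rule card_Bhalf_subset_le[OF P, where g = "\<lambda>b. 2 * \<tau> b" and s = "2 * ((?c + 1) mod 2)"])
    show "inj_on (\<lambda>b. 2 * \<tau> b) ?B"
      using index(2) by (intro inj_onI) (metis mult_left_cancel zero_neq_numeral)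
    show "\<forall>b\<in>?B. 2 * \<tau> b mod 4 = 2 * ((?c + 1) mod 2) \<and> 2 * \<tau> b \<le> 2 * ?N - 2"
    proof
      fix b assume b: "b \<in> ?B"
      have "even (3 * (?c + \<tau> b) + 1)" using index(2)[OF b] by (metis dvd_triv_left)
      hence "odd (?c + \<tau> b)" by simp
      hence "\<tau> b mod 2 = (?c + 1) mod 2" by (auto simp: mod2_eq_if)
      hence "2 * \<tau> b mod 4 = 2 * ((?c + 1) mod 2)" using mod_mult_mult1[of 2 "\<tau> b" 2] by simp
      thus "2 * \<tau> b mod 4 = 2 * ((?c + 1) mod 2) \<and> 2 * \<tau> b \<le> 2 * ?N - 2"
        using index(1)[OF b] by simp
    qed
    show "2 * ?N \<le> 2 * ?N - 2 + 2" by simp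
    show "?N + 4 \<le> 2 * card (Uset n A)" using large_Uset_bounds[OF U_large] by simp
    show "b dvd 6 * ?c + 3 * (i + j) + 2" if "b \<in> ?B" "i + j = 2 * \<tau> b" for b i j
    proof -
      have "6 * ?c + 3 * (i + j) + 2 = 4 * b" using index(2)[OF that(1)] that(2) by simp
      thus ?thesis by simp
    qed
  qed auto
  moreover have "2 \<le> ?N" using large_Uset_bounds[OF U_large] card_Uset_le[of n A] by linarith
  moreover have "4 * ((2 * ?N - 2) div 4 + 2) \<le> (2 * ?N - 2) + 8" by simp
  ultimately have "4 * card ?B + 2 * card (Uset n A) \<le> 2 * ?N + 6" by linarith
  thus ?thesis using upper_count_le[of n] by linarith
qed

lemma card_Bhalf_mod3_1_subset_le:
  assumes P: "propP A" and U_large: "n + 36 \<le> 12 * card (Uset n A)"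
    and B: "B \<subseteq> {b \<in> Bhalf n A. b mod 3 = 1}"
    and R: "\<forall>b\<in>B. 5 * b div 3 - 2 * upper_base n \<le> R" "2 * upper_count n \<le> R + 2"
  shows "5 * card B + 2 * card (Uset n A) \<le> 5 * (R div 5 + 2)"
proof -
  let ?c = "upper_base n"
  have index: "5 * b div 3 = 5 * (b div 3) + 1" "b = 3 * (b div 3) + 1" "2 * ?c \<le> 5 * (b div 3) + 1"
    if "b \<in> B" for b
  proof -
    have "b mod 3 = 1" "n < 4 * b" using that B Bhalf_bounds by auto
    thus b: "b = 3 * (b div 3) + 1" using div_mult_mod_eq[of b 3] by linarith
    have "5 * b div 3 = (3 * (5 * (b div 3) + 1) + 2) div 3" by (subst b) simp
    thus "5 * b div 3 = 5 * (b div 3) + 1" by simp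
    show "2 * ?c \<le> 5 * (b div 3) + 1"
      using b \<open>n < 4 * b\<close> large_Uset_bounds(1)[OF U_large] unfolding upper_base_def by linarith
  qed
  \<comment> \<open>\<open>5b = u + v\<close> iff the indices of \<open>u, v \<in> U\<close> add up to \<open>5b div 3 - 2 upper_base n\<close>.\<close>
  show ?thesis
  proof (rule card_Bhalf_subset_le[OF P, where g = "\<lambda>b. 5 * b div 3 - 2 * ?c" and s = "(1 + 3 * ?c) mod 5"])
    show "B \<subseteq> Bhalf n A" using B by auto
    show "inj_on (\<lambda>b. 5 * b div 3 - 2 * ?c) B"
    proof (rule inj_onI)
      fix b b' assume "b \<in> B" "b' \<in> B" "5 * b div 3 - 2 * ?c = 5 * b' div 3 - 2 * ?c"
      thus "b = b'" using index[of b] index[of b'] by linarith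
    qed
    show "\<forall>b\<in>B. (5 * b div 3 - 2 * ?c) mod 5 = (1 + 3 * ?c) mod 5 \<and> 5 * b div 3 - 2 * ?c \<le> R"
    proof
      fix b assume b: "b \<in> B"
      define x where "x = 5 * b div 3 - 2 * ?c"
      have "x mod 5 = (x + 5 * ?c) mod 5" by simp
      also have "x + 5 * ?c = 5 * (b div 3) + (1 + 3 * ?c)" using index[OF b] unfolding x_def by linarith
      also have "(5 * (b div 3) + (1 + 3 * ?c)) mod 5 = (1 + 3 * ?c) mod 5" by simp
      finally have "x mod 5 = (1 + 3 * ?c) mod 5" .
      thus "(5 * b div 3 - 2 * ?c) mod 5 = (1 + 3 * ?c) mod 5 \<and> 5 * b div 3 - 2 * ?c \<le> R"
        using R(1) b unfolding x_def by simp
    qed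
    show "upper_count n + 5 \<le> 2 * card (Uset n A)" using large_Uset_bounds[OF U_large] by simp
    show "b dvd 6 * ?c + 3 * (i + j) + 2" if "b \<in> B" "i + j = 5 * b div 3 - 2 * ?c" for b i j
    proof -
      have "i + j + 2 * ?c = 5 * (b div 3) + 1" using index[OF that(1)] that(2) by simp
      hence "6 * ?c + 3 * (i + j) + 2 = 5 * (3 * (b div 3) + 1)" by simp
      also have "\<dots> = 5 * b" using index(2)[OF that(1)] by simp
      finally show ?thesis by simp
    qed
  qed (use R(2) in auto)
qed

lemma card_Bhalf_mod3_1_le:
  assumes P: "propP A" and U_large: "n + 36 \<le> 12 * card (Uset n A)"
  shows "10 * card {b \<in> Bhalf n A. b mod 3 = 1} + 4 * card (Uset n A) \<le> n + 20"
proof -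
  have "5 * card {b \<in> Bhalf n A. b mod 3 = 1} + 2 * card (Uset n A) \<le> 5 * (n div 2 div 5 + 2)"
  proof (rule card_Bhalf_mod3_1_subset_le[OF P U_large])
    show "\<forall>b\<in>{b \<in> Bhalf n A. b mod 3 = 1}. 5 * b div 3 - 2 * upper_base n \<le> n div 2"
    proof
      fix b assume "b \<in> {b \<in> Bhalf n A. b mod 3 = 1}"
      hence "2 * b \<le> n" using Bhalf_bounds by blast
      thus "5 * b div 3 - 2 * upper_base n \<le> n div 2" unfolding upper_base_def by linarith
    qed
    show "2 * upper_count n \<le> n div 2 + 2" using upper_count_le[of n] by linarith
  qed simp
  moreover have "5 * (n div 2 div 5 + 2) \<le> n div 2 + 10" by simp
  ultimately show ?thesis by linarith
qed

lemma card_third_to_half_residue_one: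
  fixes n :: nat
  shows "18 * card {b. n < 3 * b \<and> 2 * b \<le> n \<and> b mod 3 = 1} \<le> n + 16"
proof -
  let ?H = "{b. n < 3 * b \<and> 2 * b \<le> n \<and> b mod 3 = 1}"
  have "inj_on (\<lambda>b. b div 3) ?H"
    by (rule inj_onI) (metis (mono_tags, lifting) mem_Collect_eq div_mod_decomp)
  moreover have "(\<lambda>b. b div 3) ` ?H \<subseteq> {(n + 6) div 9 ..< (n + 4) div 6}"
  proof
    fix k assume "k \<in> (\<lambda>b. b div 3) ` ?H"
    then obtain b where b: "b \<in> ?H" "k = b div 3" by blast
    hence "b = 3 * k + 1" using div_mult_mod_eq[of b 3] by simp
    thus "k \<in> {(n + 6) div 9 ..< (n + 4) div 6}" using b(1) by simp linarith
  qed
  ultimately have "card ?H \<le> card {(n + 6) div 9 ..< (n + 4) div 6}" by (intro card_inj_on_le) auto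
  thus ?thesis by simp
qed

lemma card_low_Bhalf_mod3_1_le:
  assumes P: "propP A" and U_large: "n + 36 \<le> 12 * card (Uset n A)"
  shows "5 * card {b \<in> Bhalf n A. b mod 3 = 1 \<and> 3 * b \<le> n} + 2 * card (Uset n A)
    \<le> 2 * upper_count n + 8"
proof -
  let ?N = "upper_count n"
  have "5 * card {b \<in> Bhalf n A. b mod 3 = 1 \<and> 3 * b \<le> n} + 2 * card (Uset n A)
    \<le> 5 * ((2 * ?N - 2) div 5 + 2)"
  proof (rule card_Bhalf_mod3_1_subset_le[OF P U_large])
    show "\<forall>b\<in>{b \<in> Bhalf n A. b mod 3 = 1 \<and> 3 * b \<le> n}. 5 * b div 3 - 2 * upper_base n \<le> 2 * ?N - 2"
    proof
      fix b assume b: "b \<in> {b \<in> Bhalf n A. b mod 3 = 1 \<and> 3 * b \<le> n}"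
      hence "b = 3 * (b div 3) + 1" "3 * b \<le> n" using div_mult_mod_eq[of b 3] by auto
      thus "5 * b div 3 - 2 * upper_base n \<le> 2 * ?N - 2"
        using large_Uset_bounds(1)[OF U_large] unfolding upper_count_def upper_base_def by linarith
    qed
  qed auto
  moreover have "5 * ((2 * ?N - 2) div 5 + 2) \<le> (2 * ?N - 2) + 10" by simp
  moreover have "1 \<le> ?N" using large_Uset_bounds[OF U_large] card_Uset_le[of n A] by linarith
  ultimately show ?thesis by linarith
qed

lemma Atop_sumE:
  assumes "s \<in> sumset (Atop n A) (Atop n A)"
  obtains x y where "x \<in> A" "y \<in> A" "n < 2 * x" "n < 2 * y" "s = x + y"
  using assms unfolding sumset_def Atop_def by auto

lemma Atop_sum_bounds:
  assumes "s \<in> sumset (Atop n A) (Atop n A)"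
  shows "4 * n < 3 * s" "s \<le> 2 * n"
  using assms unfolding sumset_def Atop_def by auto

lemma AP_step_4_or_8:
  fixes n m p d :: nat
  assumes d: "d \<ge> 1" and m: "n + 18 < 18 * m"
    and AP: "\<And>k. k < m \<Longrightarrow> 4 dvd p + k * d \<and> 4 * n < 3 * (p + k * d) \<and> p + k * d \<le> 2 * n"
  shows "4 dvd p" "d = 4 \<or> d = 8"
proof -
  have "2 \<le> m" using m by linarith
  show "4 dvd p" using AP[of 0] \<open>2 \<le> m\<close> by simp
  moreover have "4 dvd p + d" using AP[of 1] \<open>2 \<le> m\<close> by simp
  ultimately have "4 dvd d" by (simp add: dvd_add_right_iff)
  moreover have "d < 12"
  proof (rule ccontr)
    assume "\<not> d < 12"
    hence "(m - 1) * 12 \<le> (m - 1) * d" by simp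
    moreover have "4 * n < 3 * p" "p + (m - 1) * d \<le> 2 * n" using AP[of 0] AP[of "m - 1"] \<open>2 \<le> m\<close> by auto
    ultimately show False using m by linarith
  qed
  ultimately show "d = 4 \<or> d = 8" using d by (auto elim!: dvdE)
qed

lemma card_AP_residue_one_ge:
  fixes q e m :: nat
  assumes e: "e mod 3 \<noteq> 0"
  shows "m \<le> 3 * card {q + k * e | k. k < m \<and> (q + k * e) mod 3 = 1} + 2"
proof -
  have "\<exists>t<3. (q + t * (e mod 3)) mod 3 = 1"
  proof (cases "e mod 3 = 1")
    case True
    have "\<exists>t<3. (q + t) mod 3 = 1" by presburger
    thus ?thesis using True by simp
  next
    case False
    hence "e mod 3 = 2" using e by linarith
    moreover have "\<exists>t<3. (q + t * 2) mod 3 = 1" by presburger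
    ultimately show ?thesis by simp
  qed
  then obtain t where t: "t < 3" "(q + t * e) mod 3 = 1"
    by (metis mod_add_right_eq mod_mult_right_eq)
  define J where "J = (m + 2 - t) div 3"
  have sub: "(\<lambda>j. q + (3 * j + t) * e) ` {..<J} \<subseteq> {q + k * e | k. k < m \<and> (q + k * e) mod 3 = 1}"
  proof clarify
    fix j assume "j < J"
    hence "3 * j + t < m" using t(1) unfolding J_def by linarith
    moreover have "(q + (3 * j + t) * e) mod 3 = ((q + t * e) + 3 * (j * e)) mod 3"
      by (simp add: algebra_simps)
    hence "(q + (3 * j + t) * e) mod 3 = 1" using t(2) by simp
    ultimately show "\<exists>k. q + (3 * j + t) * e = q + k * e \<and> k < m \<and> (q + k * e) mod 3 = 1"
      by blast
  qed
  have inj: "inj_on (\<lambda>j. q + (3 * j + t) * e) {..<J}"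
  proof (rule inj_onI)
    fix j j' assume "q + (3 * j + t) * e = q + (3 * j' + t) * e"
    moreover have "e \<noteq> 0" using e by auto
    ultimately show "j = j'" by simp
  qed
  have "card {..<J} \<le> card {q + k * e | k. k < m \<and> (q + k * e) mod 3 = 1}"
    by (rule card_inj_on_le[OF inj sub]) simp
  hence "J \<le> card {q + k * e | k. k < m \<and> (q + k * e) mod 3 = 1}" by simp
  thus ?thesis using t(1) unfolding J_def by linarith
qed

lemma card_quarters_residue_one_ge:
  assumes AP: "is_AP Q m" "Q \<subseteq> {s \<in> sumset (Atop n A) (Atop n A). 4 dvd s}" and m: "n + 18 < 18 * m"
  shows "m \<le> 3 * card {q. 4 * q \<in> Q \<and> q mod 3 = 1} + 2"
proof -
  let ?E = "{q. 4 * q \<in> Q \<and> q mod 3 = 1}"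
  have Q_bounds: "4 dvd s \<and> 4 * n < 3 * s \<and> s \<le> 2 * n" if "s \<in> Q" for s
  proof -
    have "s \<in> sumset (Atop n A) (Atop n A)" "4 dvd s" using that AP(2) by auto
    thus ?thesis using Atop_sum_bounds by blast
  qed
  from AP(1) obtain p d where d: "d \<ge> 1" and Q: "Q = {p + k * d | k. k < m}"
    unfolding is_AP_def by blast
  have "p + k * d \<in> Q" if "k < m" for k using Q that by blast
  note step = AP_step_4_or_8[OF d m Q_bounds[OF this]]
  define q e where "q = p div 4" and "e = d div 4"
  have qe: "p = 4 * q" "d = 4 * e" "e = 1 \<or> e = 2" using step unfolding q_def e_def by auto
  have "{q + k * e | k. k < m \<and> (q + k * e) mod 3 = 1} \<subseteq> ?E"
  proof
    fix z assume "z \<in> {q + k * e | k. k < m \<and> (q + k * e) mod 3 = 1}"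
    then obtain k where k: "z = q + k * e" "k < m" "z mod 3 = 1" by blast
    hence "4 * z = p + k * d" using qe by simp
    thus "z \<in> ?E" using Q k by auto
  qed
  moreover have "?E \<subseteq> {..n}" using Q_bounds by fastforce
  hence "finite ?E" by (rule finite_subset) simp
  ultimately have "card {q + k * e | k. k < m \<and> (q + k * e) mod 3 = 1} \<le> card ?E"
    by (rule card_mono[rotated])
  moreover have "m \<le> 3 * card {q + k * e | k. k < m \<and> (q + k * e) mod 3 = 1} + 2"
    using qe(3) by (intro card_AP_residue_one_ge) auto
  ultimately show ?thesis by linarith
qed

lemma card_Bhalf_mod3_1_le_of_AP:
  assumes P: "propP A" and U_large: "n + 36 \<le> 12 * card (Uset n A)"
    and AP: "is_AP Q m" "Q \<subseteq> {s \<in> sumset (Atop n A) (Atop n A). 4 dvd s}" and m: "n + 18 < 18 * m"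
  shows "90 * card {b \<in> Bhalf n A. b mod 3 = 1} + 36 * card (Uset n A) + 30 * m \<le> 11 * n + 314"
proof -
  let ?B = "{b \<in> Bhalf n A. b mod 3 = 1}" and ?L = "{b \<in> Bhalf n A. b mod 3 = 1 \<and> 3 * b \<le> n}"
  define E where "E = {q. 4 * q \<in> Q \<and> q mod 3 = 1}"
  define H where "H = {b. n < 3 * b \<and> 2 * b \<le> n \<and> b mod 3 = 1}"
  have E_H: "E \<subseteq> H"
  proof
    fix q assume "q \<in> E"
    hence "4 * q \<in> sumset (Atop n A) (Atop n A)" "q mod 3 = 1" using AP(2) unfolding E_def by auto
    thus "q \<in> H" using Atop_sum_bounds[of "4 * q" n A] unfolding H_def by simp
  qed
  have "b \<notin> E" if "b \<in> ?B" for b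
  proof
    assume "b \<in> E"
    hence "4 * b \<in> sumset (Atop n A) (Atop n A)" using AP(2) unfolding E_def by auto
    then obtain x y where xy: "x \<in> A" "y \<in> A" "n < 2 * x" "n < 2 * y" "4 * b = x + y"
      by (rule Atop_sumE)
    hence "b dvd x + y" by (metis dvd_triv_right)
    thus False using Bhalf_not_dvd_upper_sum[OF P _ xy(1,3,2,4)] that by blast
  qed
  moreover have "b \<in> ?L \<union> H" if "b \<in> ?B" for b
    using that Bhalf_bounds(2)[of b n A] unfolding H_def by auto
  ultimately have "?B \<subseteq> ?L \<union> (H - E)" by blast
  have "finite H" unfolding H_def by (rule finite_subset[of _ "{..n}"]) auto
  have "card ?B \<le> card (?L \<union> (H - E))"
    using \<open>?B \<subseteq> ?L \<union> (H - E)\<close> \<open>finite H\<close> finite_Bhalf by (intro card_mono) auto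
  also have "\<dots> \<le> card ?L + card (H - E)" by (rule card_Un_le)
  finally have "card ?B \<le> card ?L + card (H - E)" .
  moreover have "card (H - E) = card H - card E" "card E \<le> card H"
    using E_H \<open>finite H\<close> finite_subset by (auto intro: card_Diff_subset card_mono)
  ultimately have "card ?B + card E \<le> card ?L + card H" by linarith
  moreover have "18 * card H \<le> n + 16" unfolding H_def by (rule card_third_to_half_residue_one)
  moreover have "5 * card ?L + 2 * card (Uset n A) \<le> 2 * upper_count n + 8"
    by (rule card_low_Bhalf_mod3_1_le[OF P U_large])
  moreover have "m \<le> 3 * card E + 2" unfolding E_def by (rule card_quarters_residue_one_ge[OF AP m])
  ultimately show ?thesis using upper_count_le[of n] by linarith
qed

theorem mainTheorem18:
  fixes n :: nat and A :: "nat set"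
  assumes "A \<subseteq> {1..n}" and "propP A"
    and "real (card (Uset n A)) \<ge> real n / 12 + 3"
  shows "real (card {b \<in> Bhalf n A. b mod 3 = 2}) \<le> real n / 12 + 2 - real (card (Uset n A)) / 2
    \<and> real (card {b \<in> Bhalf n A. b mod 3 = 1}) \<le> real n / 10 + 2 - 2 * real (card (Uset n A)) / 5
    \<and> ((\<exists>P m. is_AP P m \<and> real m \<ge> real (card (Atop n A)) / 2 - 1
               \<and> P \<subseteq> {s \<in> sumset (Atop n A) (Atop n A). 4 dvd s})
         \<longrightarrow> real (card (Atop n A)) \<le> real n / 9 + 4
           \<or> real (card {b \<in> Bhalf n A. b mod 3 = 1})
               \<le> 11 * real n / 90 + 4 - 2 * real (card (Uset n A)) / 5 - real (card (Atop n A)) / 6)"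
proof -
  have U_large: "n + 36 \<le> 12 * card (Uset n A)" using assms(3) by linarith
  have AP_case: "real (card (Atop n A)) \<le> real n / 9 + 4
      \<or> real (card {b \<in> Bhalf n A. b mod 3 = 1})
          \<le> 11 * real n / 90 + 4 - 2 * real (card (Uset n A)) / 5 - real (card (Atop n A)) / 6"
    if AP: "is_AP Q m" "real m \<ge> real (card (Atop n A)) / 2 - 1"
      "Q \<subseteq> {s \<in> sumset (Atop n A) (Atop n A). 4 dvd s}" for Q m
  proof (cases "real (card (Atop n A)) \<le> real n / 9 + 4")
    case False
    hence "n + 18 < 18 * m" using AP(2) by linarith
    from card_Bhalf_mod3_1_le_of_AP[OF assms(2) U_large AP(1,3) this]
    have "90 * real (card {b \<in> Bhalf n A. b mod 3 = 1}) + 36 * real (card (Uset n A)) + 30 * real m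
        \<le> 11 * real n + 314"
      by (simp only: of_nat_le_iff[where 'a = real, symmetric] of_nat_add of_nat_mult of_nat_numeral)
    hence "real (card {b \<in> Bhalf n A. b mod 3 = 1})
        \<le> 11 * real n / 90 + 4 - 2 * real (card (Uset n A)) / 5 - real (card (Atop n A)) / 6"
      using AP(2) by linarith
    thus ?thesis by simp
  qed simp
  show ?thesis
  proof (intro conjI impI)
    show "real (card {b \<in> Bhalf n A. b mod 3 = 2}) \<le> real n / 12 + 2 - real (card (Uset n A)) / 2"
      using card_Bhalf_mod3_2_le[OF assms(2) U_large] by linarith
    show "real (card {b \<in> Bhalf n A. b mod 3 = 1}) \<le> real n / 10 + 2 - 2 * real (card (Uset n A)) / 5"
      using card_Bhalf_mod3_1_le[OF assms(2) U_large] by linarith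
  qed (use AP_case in blast)
qed

end
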